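(* Let $f:(0,1]\to(0,\infty)$ be the compliance--volume fraction Pareto front (as described in the context) and let $f^{-1}:[f(1),+\infty[\,\to(0,1]$ be its reciprocal (inverse) function, so that $f^{-1}(f(1))=1$. Then for every real $a>1$ and every $x\in[f(1),+\infty[$, $$a\,f^{-1}(a x)\le f^{-1}(x).$$
   Context: Setting: a 2D structural topology optimization problem (compliance minimization under a volume fraction constraint) on a fixed design domain. For a volume fraction $V_f\in(0,1]$ (the ratio of the volume of the design to the volume of the design domain), $f(V_f)$ denotes the globally optimal compliance attainable by a design of volume fraction $V_f$, computed for a unit load, unit out-of-plane thickness and unit Young's modulus; the graph of $f$ is the compliance--volume fraction Pareto front. Standing assumptions used for $f$: $f$ is differentiable on $(0,1]$ with $f'(V_f)<0$ (so $f$ is strictly decreasing), and $f(V_f)\to+\infty$ as $V_f\searrow 0$, so that $f$ is a bijection from $(0,1]$ onto $[f(1),+\infty[$ with inverse $f^{-1}$. The efficiency ratio (ER) is $n(V_f)=-V_f\,f'(V_f)/f(V_f)$, and it is assumed that $n(V_f)\le 1$ for all $V_f\in(0,1]$. *)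

theory Defs
  imports "HOL-Analysis.Analysis"
begin

definition efficiency_ratio :: "(real \<Rightarrow> real) \<Rightarrow> (real \<Rightarrow> real) \<Rightarrow> real \<Rightarrow> real" where
  "efficiency_ratio f Df V = - V * Df V / f V"

end

theory Submission
  imports Defs
begin

(* The efficiency ratio bound n <= 1 says exactly that the derivative f + V f' of the product
   V f(V) is nonnegative, so V f(V) is nondecreasing.  Since f is decreasing,
   u = f^-1(a x) <= v = f^-1(x), hence a x u = u f(u) <= v f(v) = x v, i.e. a u <= v. *)

lemma has_real_derivative_at_if_within_interval:
  fixes f :: "real \<Rightarrow> real"
  assumes "is_interval S" "s \<in> S" "t \<in> S" "s < z" "z < t"
    and "(f has_real_derivative D) (at z within S)"
  shows "(f has_real_derivative D) (at z)"
proof -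
  have "{s..t} \<subseteq> S"
    using assms(1-3) unfolding is_interval_1 by (meson atLeastAtMost_iff subsetI)
  moreover have "{s<..<t} \<subseteq> {s..t}"
    by auto
  ultimately have "{s<..<t} \<subseteq> interior S"
    by (meson interior_maximal open_greaterThanLessThan order_trans)
  then have "z \<in> interior S"
    using assms(4,5) by (meson greaterThanLessThan_iff subsetD)
  then have "at z within S = at z"
    by (rule at_within_interior)
  with assms(6) show ?thesis
    by simp
qed

lemma mono_on_if_has_real_derivative_nonneg:
  fixes f :: "real \<Rightarrow> real"
  assumes S: "is_interval S"
    and deriv: "\<And>x. x \<in> S \<Longrightarrow> (f has_real_derivative f' x) (at x within S)"
    and nonneg: "\<And>x. x \<in> S \<Longrightarrow> f' x \<ge> 0"
  shows "mono_on S f"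
proof (rule mono_onI)
  fix s t assume st: "s \<in> S" "t \<in> S" "s \<le> t"
  then have sub: "{s..t} \<subseteq> S"
    using S unfolding is_interval_1 by (meson atLeastAtMost_iff subsetI)
  show "f s \<le> f t"
  proof (rule DERIV_nonneg_imp_increasing_open[OF \<open>s \<le> t\<close>])
    fix z assume z: "s < z" "z < t"
    then have "z \<in> S"
      using sub by (meson atLeastAtMost_iff less_imp_le subsetD)
    then have "(f has_real_derivative f' z) (at z)" "f' z \<ge> 0"
      using has_real_derivative_at_if_within_interval[OF S st(1,2) z deriv] nonneg by auto
    then show "\<exists>y. (f has_real_derivative y) (at z) \<and> y \<ge> 0" by blast
  next
    have "continuous_on S f"
      using deriv DERIV_continuous continuous_on_eq_continuous_within by blast
    then show "continuous_on {s..t} f"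
      using sub continuous_on_subset by blast
  qed
qed

lemma antimono_on_if_has_real_derivative_nonpos:
  fixes f :: "real \<Rightarrow> real"
  assumes "is_interval S"
    and "\<And>x. x \<in> S \<Longrightarrow> (f has_real_derivative f' x) (at x within S)"
    and "\<And>x. x \<in> S \<Longrightarrow> f' x \<le> 0"
  shows "antimono_on S f"
proof -
  have "mono_on S (\<lambda>x. - f x)"
    using assms by (intro mono_on_if_has_real_derivative_nonneg[where f' = "\<lambda>x. - f' x"])
      (auto intro: derivative_intros)
  then show ?thesis
    unfolding monotone_on_def by auto
qed

lemma mono_on_times_self_if_efficiency_ratio_le_1:
  fixes f Df :: "real \<Rightarrow> real"
  assumes S: "is_interval S"
    and pos: "\<And>V. V \<in> S \<Longrightarrow> f V > 0"
    and deriv: "\<And>V. V \<in> S \<Longrightarrow> (f has_real_derivative Df V) (at V within S)"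
    and ER: "\<And>V. V \<in> S \<Longrightarrow> efficiency_ratio f Df V \<le> 1"
  shows "mono_on S (\<lambda>V. V * f V)"
proof (rule mono_on_if_has_real_derivative_nonneg[OF S])
  fix V assume V: "V \<in> S"
  show "((\<lambda>V. V * f V) has_real_derivative f V + V * Df V) (at V within S)"
    using deriv[OF V] by (auto intro!: derivative_eq_intros)
  have "- V * Df V / f V \<le> 1"
    using ER[OF V] unfolding efficiency_ratio_def .
  then show "f V + V * Df V \<ge> 0"
    using pos[OF V] by (simp add: field_simps)
qed

lemma in_image_if_filterlim_at_top_at_right:
  fixes f :: "real \<Rightarrow> real"
  assumes "l < r" "continuous_on {l<..r} f"
    and lim: "filterlim f at_top (at_right l)"
    and y: "f r \<le> y"
  shows "y \<in> f ` {l<..r}"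
proof -
  have "eventually (\<lambda>t. l < t \<and> t < r \<and> f t > y) (at_right l)"
  proof (intro eventually_conj)
    show "eventually (\<lambda>t. f t > y) (at_right l)"
      using lim by (simp add: filterlim_at_top_dense)
    show "eventually (\<lambda>t. t < r) (at_right l)"
      using \<open>l < r\<close> by (auto simp: eventually_at_right_field)
  qed (rule eventually_at_right_less)
  then obtain t where t: "l < t" "t < r" "f t > y"
    using eventually_happens'[OF trivial_limit_at_right_real] by blast
  moreover have "continuous_on {t..r} f"
    using assms(2) by (rule continuous_on_subset) (use t in auto)
  ultimately obtain z where "t \<le> z" "z \<le> r" "f z = y"
    using IVT2'[of f r y t] y by auto
  then show ?thesis
    using t by auto
qed

lemma mult_le_if_antimono_on_and_mono_on_times_self:
  fixes f :: "real \<Rightarrow> real"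
  assumes anti: "antimono_on S f" and mono: "mono_on S (\<lambda>V. V * f V)"
    and uv: "u \<in> S" "v \<in> S" and fu: "f u = a * f v"
    and "f v > 0" "a > 1"
  shows "a * u \<le> v"
proof -
  have "u \<le> v"
  proof (rule ccontr)
    assume "\<not> u \<le> v"
    then have "f u \<le> f v"
      using monotone_onD[OF anti uv(2,1)] by simp
    then show False
      using fu \<open>f v > 0\<close> \<open>a > 1\<close> by simp
  qed
  then have "u * (a * f v) \<le> v * f v"
    using monotone_onD[OF mono uv] fu by simp
  then show ?thesis
    using \<open>f v > 0\<close> by (simp add: algebra_simps)
qed

theorem lemma2:
  fixes f Df :: "real \<Rightarrow> real"
  assumes pos: "\<And>V. V \<in> {0<..1} \<Longrightarrow> f V > 0"
    and deriv: "\<And>V. V \<in> {0<..1} \<Longrightarrow> (f has_real_derivative Df V) (at V within {0<..1})"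
    and neg: "\<And>V. V \<in> {0<..1} \<Longrightarrow> Df V < 0"
    and lim0: "filterlim f at_top (at_right 0)"
    and ER: "\<And>V. V \<in> {0<..1} \<Longrightarrow> efficiency_ratio f Df V \<le> 1"
    and a: "a > 1"
    and x: "x \<ge> f 1"
  shows "a * inv_into {0<..1} f (a * x) \<le> inv_into {0<..1} f x"
proof -
  let ?S = "{0<..1::real}"
  have S: "is_interval ?S"
    by (simp add: is_interval_1)
  have cont: "continuous_on ?S f"
    using deriv DERIV_continuous continuous_on_eq_continuous_within by blast
  have "x > 0"
    using pos[of 1] x by auto
  then have "f 1 \<le> a * x"
    using x a by (simp add: order_trans[OF x])
  then have "a * x \<in> f ` ?S" "x \<in> f ` ?S"
    using in_image_if_filterlim_at_top_at_right[OF _ cont lim0] x by auto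
  then have "inv_into ?S f (a * x) \<in> ?S" "inv_into ?S f x \<in> ?S"
    and "f (inv_into ?S f (a * x)) = a * f (inv_into ?S f x)" "f (inv_into ?S f x) > 0"
    using \<open>x > 0\<close> by (simp_all only: inv_into_into f_inv_into_f)
  moreover have "antimono_on ?S f"
    using antimono_on_if_has_real_derivative_nonpos[OF S deriv less_imp_le[OF neg]] .
  moreover have "mono_on ?S (\<lambda>V. V * f V)"
    by (intro mono_on_times_self_if_efficiency_ratio_le_1[where Df = Df] S pos deriv ER)
  ultimately show ?thesis
    using mult_le_if_antimono_on_and_mono_on_times_self a by blast
qed

end
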